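(* Let $H \le G$ be finite groups and let $[H,K]$ be the bottom interval of $[H,G]$. If $[H,K]$ is linearly primitive (i.e. there is an irreducible complex representation $U$ of $K$ with $K_{(U^H)} = H$), then $[H,G]$ is linearly primitive.
   Context: The interval $[H,G]$ is the lattice of subgroups $L$ with $H \le L \le G$ (meet = intersection, join = generated subgroup); its atoms are its minimal elements strictly above $H$, and its bottom interval is $[H,K]$ with $K$ the join of all atoms. For a group $L$ acting linearly on $V$, $M \le L$ and a subspace $X$: $V^M = \{v : mv = v \ \forall m \in M\}$ and $L_{(X)} = \{l \in L : lx = x \ \forall x \in X\}$. An interval $[H,G]$ of finite groups is linearly primitive if there is an irreducible complex representation $V$ of $G$ with $G_{(V^H)} = H$. *)

theory Defs
  imports "HOL-Algebra.Generated_Groups" "Jordan_Normal_Form.Matrix"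
begin

definition is_rep :: "('a, 'b) monoid_scheme \<Rightarrow> nat \<Rightarrow> ('a \<Rightarrow> complex mat) \<Rightarrow> bool" where
  "is_rep G n \<rho> \<longleftrightarrow>
     (\<forall>g \<in> carrier G. \<rho> g \<in> carrier_mat n n) \<and>
     \<rho> \<one>\<^bsub>G\<^esub> = 1\<^sub>m n \<and>
     (\<forall>g \<in> carrier G. \<forall>h \<in> carrier G. \<rho> (g \<otimes>\<^bsub>G\<^esub> h) = \<rho> g * \<rho> h)"

definition is_subspace :: "nat \<Rightarrow> complex vec set \<Rightarrow> bool" where
  "is_subspace n W \<longleftrightarrow> W \<subseteq> carrier_vec n \<and> 0\<^sub>v n \<in> W \<and>
     (\<forall>v \<in> W. \<forall>w \<in> W. v + w \<in> W) \<and> (\<forall>c. \<forall>v \<in> W. c \<cdot>\<^sub>v v \<in> W)"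

definition is_irred_rep :: "('a, 'b) monoid_scheme \<Rightarrow> nat \<Rightarrow> ('a \<Rightarrow> complex mat) \<Rightarrow> bool" where
  "is_irred_rep G n \<rho> \<longleftrightarrow> is_rep G n \<rho> \<and> n > 0 \<and>
     (\<forall>W. is_subspace n W \<and> (\<forall>g \<in> carrier G. \<forall>w \<in> W. \<rho> g *\<^sub>v w \<in> W)
          \<longrightarrow> W = {0\<^sub>v n} \<or> W = carrier_vec n)"

definition fixed_space :: "nat \<Rightarrow> ('a \<Rightarrow> complex mat) \<Rightarrow> 'a set \<Rightarrow> complex vec set" where
  "fixed_space n \<rho> M = {v \<in> carrier_vec n. \<forall>m \<in> M. \<rho> m *\<^sub>v v = v}"

definition pointwise_stab :: "('a, 'b) monoid_scheme \<Rightarrow> ('a \<Rightarrow> complex mat) \<Rightarrow> complex vec set \<Rightarrow> 'a set" where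
  "pointwise_stab L \<rho> X = {l \<in> carrier L. \<forall>x \<in> X. \<rho> l *\<^sub>v x = x}"

definition lin_primitive :: "('a, 'b) monoid_scheme \<Rightarrow> 'a set \<Rightarrow> bool" where
  "lin_primitive G H \<longleftrightarrow>
     (\<exists>n \<rho>. is_irred_rep G n \<rho> \<and> pointwise_stab G \<rho> (fixed_space n \<rho> H) = H)"

definition interval_atoms :: "('a, 'b) monoid_scheme \<Rightarrow> 'a set \<Rightarrow> 'a set set" where
  "interval_atoms G H = {L. subgroup L G \<and> H \<subset> L \<and>
      \<not> (\<exists>M. subgroup M G \<and> H \<subset> M \<and> M \<subset> L)}"

text \<open>Top of the bottom interval: the join (in [H,G]) of all atoms.\<close>
definition bottom_top :: "('a, 'b) monoid_scheme \<Rightarrow> 'a set \<Rightarrow> 'a set" where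
  "bottom_top G H = generate G (H \<union> \<Union>(interval_atoms G H))"

end

(*
  Let \<rho> be an irreducible representation of K on U with K_(U^H) = H, and u a nonzero vector of U.
  The map sending the basis vector of g in the regular representation of G to \<rho>(g) u if g \<in> K,
  and to 0 otherwise, is K-equivariant and nonzero. The regular representation is unitary, hence
  completely reducible, so one of its irreducible constituents V still admits a nonzero
  K-equivariant map A : V \<rightarrow> U, and A is onto because U is irreducible. Averaging over H lifts
  every H-fixed vector of U to an H-fixed vector of V, so every element of K fixing V^H
  pointwise fixes U^H pointwise: G_(V^H) \<inter> K \<subseteq> H. Now G_(V^H) is a subgroup
  containing H; if it were larger, it would contain an atom of [H, G], and atoms lie in K.
*)

theory Submission
  imports Defs "Jordan_Normal_Form.Schur_Decomposition" "Jordan_Normal_Form.DL_Rank"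
begin

section \<open>Adjoints and the Hermitian product\<close>

lemma mult_mat_vec_zero [simp]: "A \<in> carrier_mat m n \<Longrightarrow> A *\<^sub>v 0\<^sub>v n = 0\<^sub>v m"
  by (rule eq_vecI) (auto simp: scalar_prod_def)

lemma mat_adjoint_carrier [simp]: "A \<in> carrier_mat m n \<Longrightarrow> mat_adjoint A \<in> carrier_mat n m"
  unfolding mat_adjoint_def by auto

lemma mat_adjoint_dim [simp]:
  "dim_row (mat_adjoint A) = dim_col A" "dim_col (mat_adjoint A) = dim_row A"
  unfolding mat_adjoint_def by auto

lemma mat_adjoint_index [simp]:
  "i < dim_col A \<Longrightarrow> j < dim_row A \<Longrightarrow> mat_adjoint A $$ (i, j) = conjugate (A $$ (j, i))"
  unfolding mat_adjoint_def by (simp add: mat_of_rows_index)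

lemma mat_adjoint_adjoint [simp]: "mat_adjoint (mat_adjoint (A :: 'a :: conjugatable_field mat)) = A"
  by (rule eq_matI) auto

lemma mat_adjoint_mult:
  fixes A :: "'a :: conjugatable_field mat"
  assumes "A \<in> carrier_mat a b" and "B \<in> carrier_mat b c"
  shows "mat_adjoint (A * B) = mat_adjoint B * mat_adjoint A"
proof (rule eq_matI)
  fix i j assume "i < dim_row (mat_adjoint B * mat_adjoint A)" "j < dim_col (mat_adjoint B * mat_adjoint A)"
  with assms have "i < c" "j < a" by auto
  with assms show "mat_adjoint (A * B) $$ (i, j) = (mat_adjoint B * mat_adjoint A) $$ (i, j)"
    by (simp add: scalar_prod_def sum_conjugate conjugate_dist_mul mult.commute)
qed (use assms in auto)

lemma cscalar_prod_mat_adjoint: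
  fixes A :: "'a :: conjugatable_field mat"
  assumes A: "A \<in> carrier_mat a b" and x: "x \<in> carrier_vec b" and y: "y \<in> carrier_vec a"
  shows "(A *\<^sub>v x) \<bullet>c y = x \<bullet>c (mat_adjoint A *\<^sub>v y)"
proof -
  have "(A *\<^sub>v x) \<bullet>c y = (\<Sum>i<a. \<Sum>j<b. A $$ (i, j) * x $ j * conjugate (y $ i))"
    using assms by (simp add: scalar_prod_def sum_distrib_right atLeast0LessThan)
  also have "\<dots> = (\<Sum>j<b. \<Sum>i<a. x $ j * conjugate (conjugate (A $$ (i, j)) * y $ i))"
    by (subst sum.swap) (simp add: conjugate_dist_mul mult_ac)
  also have "\<dots> = x \<bullet>c (mat_adjoint A *\<^sub>v y)"
    using assms by (simp add: scalar_prod_def sum_distrib_left sum_conjugate atLeast0LessThan)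
  finally show ?thesis .
qed

lemma cscalar_prod_swap:
  fixes x y :: "complex vec"
  assumes "x \<in> carrier_vec n" and "y \<in> carrier_vec n"
  shows "y \<bullet>c x = cnj (x \<bullet>c y)"
  using conjugate_sprod_vec[of x n "conjugate y"] conjugate_vec_sprod_comm[OF assms(2,1)] assms
  by simp

lemma cscalar_prod_normalize:
  fixes x :: "complex vec"
  assumes x: "x \<in> carrier_vec n" and "x \<noteq> 0\<^sub>v n"
  obtains c where "(c \<cdot>\<^sub>v x) \<bullet>c (c \<cdot>\<^sub>v x) = 1"
proof -
  have pos: "x \<bullet>c x > 0" using assms by simp
  define s where "s = Re (x \<bullet>c x)"
  have "x \<bullet>c x = of_real s" and "s > 0"
    using pos unfolding s_def by (auto simp: less_complex_def complex_eq_iff)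
  moreover define c where "c = complex_of_real (1 / sqrt s)"
  ultimately have "(c \<cdot>\<^sub>v x) \<bullet>c (c \<cdot>\<^sub>v x) = 1"
    using x by (simp add: conjugate_smult_vec of_real_mult[symmetric] del: of_real_mult)
  then show thesis by (rule that)
qed

lemma eq_mat_on_vecI:
  fixes A B :: "'a :: comm_ring_1 mat"
  assumes A: "A \<in> carrier_mat m n" and B: "B \<in> carrier_mat m n"
    and eq: "\<And>v. v \<in> carrier_vec n \<Longrightarrow> A *\<^sub>v v = B *\<^sub>v v"
  shows "A = B"
proof (rule eq_matI)
  fix i j assume "i < dim_row B" "j < dim_col B"
  then have i: "i < m" and j: "j < n" using B by auto
  have entry: "(M *\<^sub>v unit_vec n j) $ i = M $$ (i, j)" if "M \<in> carrier_mat m n" for M :: "'a mat"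
    using that i j by simp
  show "A $$ (i, j) = B $$ (i, j)"
    using entry[OF A] entry[OF B] eq[of "unit_vec n j"] j by simp
qed (use A B in auto)

section \<open>Orthonormal bases of subspaces\<close>

lemma mat_adjoint_mult_self_index:
  fixes B :: "'a :: conjugatable_field mat"
  assumes "B \<in> carrier_mat m d" and "i < d" and "j < d"
  shows "(mat_adjoint B * B) $$ (i, j) = col B j \<bullet>c col B i"
  using assms by (simp add: scalar_prod_def mult.commute)

lemma mat_adjoint_mult_vec_index:
  fixes B :: "'a :: conjugatable_field mat"
  assumes "B \<in> carrier_mat m d" and "i < d" and "v \<in> carrier_vec m"
  shows "(mat_adjoint B *\<^sub>v v) $ i = v \<bullet>c col B i"
  using assms by (simp add: scalar_prod_def mult.commute)

lemma isometry_dim_le: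
  fixes B :: "complex mat"
  assumes B: "B \<in> carrier_mat m d" and iso: "mat_adjoint B * B = 1\<^sub>m d"
  shows "d \<le> m"
proof -
  interpret vec_space "TYPE(complex)" m .
  have dist: "distinct (cols B)"
  proof (rule ccontr)
    assume "\<not> distinct (cols B)"
    then obtain i j where "i < d" "j < d" "i \<noteq> j" "col B i = col B j"
      using B by (auto simp: distinct_conv_nth)
    then show False
      using mat_adjoint_mult_self_index[OF B, of i j] mat_adjoint_mult_self_index[OF B, of i i] iso
      by simp
  qed
  have indep: "\<not> lin_dep (set (cols B))"
  proof
    assume "lin_dep (set (cols B))"
    then obtain v where v: "v \<in> carrier_vec d" "v \<noteq> 0\<^sub>v d" "B *\<^sub>v v = 0\<^sub>v m"
      using lin_depE[OF B _ dist] by blast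
    have "v = (mat_adjoint B * B) *\<^sub>v v" using iso v by simp
    also have "\<dots> = 0\<^sub>v d" using B v by (simp add: assoc_mult_mat_vec[of _ d m _ d])
    finally show False using v by simp
  qed
  have "card (set (cols B)) \<le> dim"
    using li_le_dim(2)[OF fin_dim _ indep] B by (metis cols_dim carrier_matD(1))
  then show ?thesis using dim_is_n distinct_card[OF dist] B by simp
qed

lemma isometry_mat_of_cols_snoc:
  fixes b :: "complex vec"
  assumes bs: "set bs \<subseteq> carrier_vec m" and b: "b \<in> carrier_vec m"
    and iso: "mat_adjoint (mat_of_cols m bs) * mat_of_cols m bs = 1\<^sub>m (length bs)"
    and orth: "mat_adjoint (mat_of_cols m bs) *\<^sub>v b = 0\<^sub>v (length bs)"
    and unit: "b \<bullet>c b = 1"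
  shows "mat_adjoint (mat_of_cols m (bs @ [b])) * mat_of_cols m (bs @ [b]) = 1\<^sub>m (Suc (length bs))"
proof (rule eq_matI)
  let ?B = "mat_of_cols m bs" and ?B' = "mat_of_cols m (bs @ [b])"
  have B: "?B \<in> carrier_mat m (length bs)" and B': "?B' \<in> carrier_mat m (Suc (length bs))"
    by auto
  have cols: "set (bs @ [b]) \<subseteq> carrier_vec m" using bs b by simp
  have col': "col ?B' j = (if j < length bs then col ?B j else b)" if "j < Suc (length bs)" for j
  proof -
    have "col ?B' j = (bs @ [b]) ! j"
      using that cols by (intro col_mat_of_cols) (auto simp: nth_append less_Suc_eq)
    moreover have "j < length bs \<Longrightarrow> col ?B j = bs ! j"
      using bs by (intro col_mat_of_cols) (auto intro: nth_mem)
    ultimately show ?thesis using that by (auto simp: nth_append less_Suc_eq)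
  qed
  have orth_col: "b \<bullet>c col ?B i = 0" "col ?B i \<bullet>c b = 0" if "i < length bs" for i
  proof -
    show "b \<bullet>c col ?B i = 0"
      using orth mat_adjoint_mult_vec_index[OF B that b] that by simp
    moreover have "col ?B i \<in> carrier_vec m" using B that by (simp add: col_dim)
    ultimately show "col ?B i \<bullet>c b = 0" using cscalar_prod_swap[OF b] by simp
  qed
  fix i j assume "i < dim_row (1\<^sub>m (Suc (length bs)))" "j < dim_col (1\<^sub>m (Suc (length bs)))"
  then have i: "i < Suc (length bs)" and j: "j < Suc (length bs)" by auto
  show "(mat_adjoint ?B' * ?B') $$ (i, j) = 1\<^sub>m (Suc (length bs)) $$ (i, j)"
    unfolding mat_adjoint_mult_self_index[OF B' i j] col'[OF i] col'[OF j]
    using mat_adjoint_mult_self_index[OF B, of i j] iso i j unit orth_col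
    by (cases "i < length bs"; cases "j < length bs") (auto simp: less_Suc_eq)
qed auto

lemma isometry_residual:
  assumes B: "B \<in> carrier_mat m d" and iso: "mat_adjoint B * B = 1\<^sub>m d" and w: "w \<in> carrier_vec m"
  shows "mat_adjoint B *\<^sub>v (w - B *\<^sub>v (mat_adjoint B *\<^sub>v w)) = 0\<^sub>v d"
proof -
  have A: "mat_adjoint B \<in> carrier_mat d m" using B by simp
  have Aw: "mat_adjoint B *\<^sub>v w \<in> carrier_vec d" using A w by simp
  have "mat_adjoint B *\<^sub>v (w - B *\<^sub>v (mat_adjoint B *\<^sub>v w))
      = mat_adjoint B *\<^sub>v w - (mat_adjoint B * B) *\<^sub>v (mat_adjoint B *\<^sub>v w)"
    using mult_minus_distrib_mat_vec[OF A w] assoc_mult_mat_vec[OF A B Aw] B Aw by simp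
  then show ?thesis using iso Aw by simp
qed

definition orthonormal_basis_mat :: "nat \<Rightarrow> complex vec set \<Rightarrow> complex mat \<Rightarrow> bool" where
  "orthonormal_basis_mat m W B \<longleftrightarrow>
     B \<in> carrier_mat m (dim_col B) \<and> mat_adjoint B * B = 1\<^sub>m (dim_col B) \<and>
     W = (\<lambda>y. B *\<^sub>v y) ` carrier_vec (dim_col B)"

lemma orthonormal_basis_mat_carrier:
  "orthonormal_basis_mat m W B \<Longrightarrow> B \<in> carrier_mat m (dim_col B)"
  unfolding orthonormal_basis_mat_def by blast

lemma orthonormal_basis_mat_isometry:
  "orthonormal_basis_mat m W B \<Longrightarrow> mat_adjoint B * B = 1\<^sub>m (dim_col B)"
  unfolding orthonormal_basis_mat_def by blast

lemma orthonormal_basis_mat_mem: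
  "orthonormal_basis_mat m W B \<Longrightarrow> y \<in> carrier_vec (dim_col B) \<Longrightarrow> B *\<^sub>v y \<in> W"
  unfolding orthonormal_basis_mat_def by blast

lemma orthonormal_basis_mat_proj:
  assumes B: "orthonormal_basis_mat m W B" and w: "w \<in> W"
  shows "B *\<^sub>v (mat_adjoint B *\<^sub>v w) = w"
proof -
  have Bc: "B \<in> carrier_mat m (dim_col B)" and iso: "mat_adjoint B * B = 1\<^sub>m (dim_col B)"
    using orthonormal_basis_mat_carrier[OF B] orthonormal_basis_mat_isometry[OF B] .
  obtain y where y: "y \<in> carrier_vec (dim_col B)" and wy: "w = B *\<^sub>v y"
    using B w unfolding orthonormal_basis_mat_def by blast
  have "mat_adjoint B *\<^sub>v w = (mat_adjoint B * B) *\<^sub>v y"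
    unfolding wy using assoc_mult_mat_vec[OF mat_adjoint_carrier[OF Bc] Bc y] by simp
  then show ?thesis using iso y wy by simp
qed

lemma orthonormal_basis_mat_subset:
  assumes "orthonormal_basis_mat m W B" shows "W \<subseteq> carrier_vec m"
proof
  fix w assume "w \<in> W"
  then obtain y where "y \<in> carrier_vec (dim_col B)" "w = B *\<^sub>v y"
    using assms unfolding orthonormal_basis_mat_def by blast
  then show "w \<in> carrier_vec m"
    using assms mult_mat_vec_carrier unfolding orthonormal_basis_mat_def by blast
qed

lemma orthonormal_basis_mat_dim_less:
  assumes B: "orthonormal_basis_mat m W B" and W: "W \<noteq> carrier_vec m"
  shows "dim_col B < m"
proof -
  have Bc: "B \<in> carrier_mat m (dim_col B)" and iso: "mat_adjoint B * B = 1\<^sub>m (dim_col B)"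
    using orthonormal_basis_mat_carrier[OF B] orthonormal_basis_mat_isometry[OF B] .
  have "dim_col B \<noteq> m"
  proof
    assume d: "dim_col B = m"
    have Bm: "B \<in> carrier_mat m m" using Bc d by simp
    then have Am: "mat_adjoint B \<in> carrier_mat m m" by simp
    have "B * mat_adjoint B = 1\<^sub>m m"
      using mat_mult_left_right_inverse[OF Am Bm] iso d by simp
    then have "x = B *\<^sub>v (mat_adjoint B *\<^sub>v x)" if "x \<in> carrier_vec m" for x
      using assoc_mult_mat_vec[OF Bm Am that] that by simp
    moreover have "B *\<^sub>v (mat_adjoint B *\<^sub>v x) \<in> W" if "x \<in> carrier_vec m" for x
      using orthonormal_basis_mat_mem[OF B] Am d that by simp
    ultimately have "carrier_vec m \<subseteq> W" by (metis subsetI)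
    then show False using W orthonormal_basis_mat_subset[OF B] by blast
  qed
  then show ?thesis using isometry_dim_le[OF Bc iso] by simp
qed

lemma subspace_diff:
  assumes W: "is_subspace m W" and v: "v \<in> W" and w: "w \<in> W"
  shows "v - w \<in> W"
proof -
  have "v \<in> carrier_vec m" "w \<in> carrier_vec m" using W v w unfolding is_subspace_def by auto
  then have "v - w = v + (-1) \<cdot>\<^sub>v w" by (intro eq_vecI) auto
  moreover have "(-1) \<cdot>\<^sub>v w \<in> W" using W w unfolding is_subspace_def by blast
  ultimately show ?thesis using W v unfolding is_subspace_def by metis
qed

lemma subspace_mat_of_cols_mult:
  assumes W: "is_subspace m W"
  shows "set bs \<subseteq> W \<Longrightarrow> y \<in> carrier_vec (length bs) \<Longrightarrow> mat_of_cols m bs *\<^sub>v y \<in> W"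
proof (induction bs arbitrary: y)
  case Nil
  have "mat_of_cols m [] *\<^sub>v y = 0\<^sub>v m" using Nil by (intro eq_vecI) (auto simp: scalar_prod_def)
  then show ?case using W unfolding is_subspace_def by simp
next
  case (Cons b bs)
  let ?y = "vec (length bs) (\<lambda>i. y $ Suc i)"
  have b: "b \<in> carrier_vec m" using Cons.prems(1) W unfolding is_subspace_def by auto
  have "mat_of_cols m (b # bs) *\<^sub>v y = (y $ 0) \<cdot>\<^sub>v b + mat_of_cols m bs *\<^sub>v ?y"
  proof (rule eq_vecI)
    fix r assume "r < dim_vec ((y $ 0) \<cdot>\<^sub>v b + mat_of_cols m bs *\<^sub>v ?y)"
    then have r: "r < m" using b by simp
    have "(mat_of_cols m (b # bs) *\<^sub>v y) $ r = (\<Sum>j<Suc (length bs). (b # bs) ! j $ r * y $ j)"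
      using r Cons.prems(2) by (simp add: scalar_prod_def atLeast0LessThan mat_of_cols_index)
    also have "\<dots> = b $ r * y $ 0 + (\<Sum>j<length bs. bs ! j $ r * y $ Suc j)"
      by (subst sum.lessThan_Suc_shift) simp
    finally show "(mat_of_cols m (b # bs) *\<^sub>v y) $ r = ((y $ 0) \<cdot>\<^sub>v b + mat_of_cols m bs *\<^sub>v ?y) $ r"
      using r b by (simp add: scalar_prod_def atLeast0LessThan mat_of_cols_index mult.commute)
  qed (use b in auto)
  moreover have "mat_of_cols m bs *\<^sub>v ?y \<in> W" using Cons by simp
  ultimately show ?case using W Cons.prems(1) unfolding is_subspace_def by simp
qed

text \<open>A longest orthonormal list in \<open>W\<close> spans \<open>W\<close>: otherwise the normalised residual of some
  vector of \<open>W\<close> would extend it.\<close>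

lemma subspace_has_orthonormal_basis_mat:
  assumes W: "is_subspace m W"
  obtains B where "orthonormal_basis_mat m W B"
proof -
  let ?P = "\<lambda>bs. set bs \<subseteq> W \<and> mat_adjoint (mat_of_cols m bs) * mat_of_cols m bs = 1\<^sub>m (length bs)"
  have Wc: "W \<subseteq> carrier_vec m" using W unfolding is_subspace_def by simp
  have "?P []" by (auto intro!: eq_matI)
  moreover have "length bs < Suc m" if "?P bs" for bs
    using that isometry_dim_le[of "mat_of_cols m bs" m "length bs"] by simp
  ultimately obtain bs where bs: "?P bs" and max: "\<And>cs. ?P cs \<Longrightarrow> length cs \<le> length bs"
    using ex_has_greatest_nat[of ?P "[]" length "Suc m"] by blast
  define B where "B = mat_of_cols m bs"
  have Bc: "B \<in> carrier_mat m (length bs)" and Ac: "mat_adjoint B \<in> carrier_mat (length bs) m"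
    and iso: "mat_adjoint B * B = 1\<^sub>m (length bs)"
    using bs unfolding B_def by auto
  have range_B: "B *\<^sub>v y \<in> W" if "y \<in> carrier_vec (length bs)" for y
    using subspace_mat_of_cols_mult[OF W] bs that unfolding B_def by blast
  have "w = B *\<^sub>v (mat_adjoint B *\<^sub>v w)" if w: "w \<in> W" for w
  proof -
    have wc: "w \<in> carrier_vec m" using w Wc by auto
    define r where "r = w - B *\<^sub>v (mat_adjoint B *\<^sub>v w)"
    have r: "r \<in> W" unfolding r_def using subspace_diff[OF W w range_B] Ac wc by simp
    have rc: "r \<in> carrier_vec m" using r Wc by auto
    have orth: "mat_adjoint B *\<^sub>v r = 0\<^sub>v (length bs)"
      unfolding r_def by (rule isometry_residual[OF Bc iso wc])
    have "r = 0\<^sub>v m"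
    proof (rule ccontr)
      assume "r \<noteq> 0\<^sub>v m"
      then obtain c where unit: "(c \<cdot>\<^sub>v r) \<bullet>c (c \<cdot>\<^sub>v r) = 1"
        using cscalar_prod_normalize[OF rc] by blast
      have "mat_adjoint B *\<^sub>v (c \<cdot>\<^sub>v r) = 0\<^sub>v (length bs)"
        unfolding mult_mat_vec[OF Ac rc] orth by (intro eq_vecI) auto
      then have "?P (bs @ [c \<cdot>\<^sub>v r])"
        using isometry_mat_of_cols_snoc[of bs m "c \<cdot>\<^sub>v r"] bs Wc r rc unit W
        unfolding B_def is_subspace_def by auto
      then show False using max by fastforce
    qed
    then show ?thesis using wc Ac unfolding r_def by (intro eq_vecI) (auto simp: vec_eq_iff)
  qed
  moreover have "mat_adjoint B *\<^sub>v w \<in> carrier_vec (length bs)" if "w \<in> W" for w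
    using Ac Wc that by auto
  ultimately have "W \<subseteq> (\<lambda>y. B *\<^sub>v y) ` carrier_vec (length bs)" by blast
  then have "W = (\<lambda>y. B *\<^sub>v y) ` carrier_vec (length bs)" using range_B by blast
  then have "orthonormal_basis_mat m W B"
    using Bc iso unfolding orthonormal_basis_mat_def by simp
  then show thesis by (rule that)
qed

definition orth_compl :: "nat \<Rightarrow> complex vec set \<Rightarrow> complex vec set" where
  "orth_compl m W = {x \<in> carrier_vec m. \<forall>w \<in> W. x \<bullet>c w = 0}"

lemma subspace_orth_compl:
  assumes W: "W \<subseteq> carrier_vec m"
  shows "is_subspace m (orth_compl m W)"
  unfolding is_subspace_def
proof (intro conjI ballI allI)
  show "orth_compl m W \<subseteq> carrier_vec m" unfolding orth_compl_def by auto
  show "0\<^sub>v m \<in> orth_compl m W" using W unfolding orth_compl_def by auto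
  fix v w assume "v \<in> orth_compl m W" "w \<in> orth_compl m W"
  then show "v + w \<in> orth_compl m W"
    using W unfolding orth_compl_def
    by (auto simp: add_scalar_prod_distrib[of _ m _ "conjugate _"] subset_iff)
next
  fix c v assume "v \<in> orth_compl m W"
  then show "c \<cdot>\<^sub>v v \<in> orth_compl m W"
    using W unfolding orth_compl_def by (auto simp: subset_iff)
qed

lemma orth_compl_neq_carrier:
  assumes W: "W \<subseteq> carrier_vec m" and w: "w \<in> W" "w \<noteq> 0\<^sub>v m"
  shows "orth_compl m W \<noteq> carrier_vec m"
proof
  assume "orth_compl m W = carrier_vec m"
  then have "w \<bullet>c w = 0" using W w unfolding orth_compl_def by blast
  then show False using W w by auto
qed

lemma orthonormal_basis_mat_residual:
  assumes B: "orthonormal_basis_mat m W B" and x: "x \<in> carrier_vec m"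
  shows "x - B *\<^sub>v (mat_adjoint B *\<^sub>v x) \<in> orth_compl m W"
proof -
  define d where "d = dim_col B"
  have Bc: "B \<in> carrier_mat m d" using orthonormal_basis_mat_carrier[OF B] unfolding d_def .
  have Ac: "mat_adjoint B \<in> carrier_mat d m" using Bc by simp
  have Px: "B *\<^sub>v (mat_adjoint B *\<^sub>v x) \<in> carrier_vec m"
    using mult_mat_vec_carrier[OF Bc mult_mat_vec_carrier[OF Ac x]] .
  have "(x - B *\<^sub>v (mat_adjoint B *\<^sub>v x)) \<bullet>c w = 0" if w: "w \<in> W" for w
  proof -
    have wc: "w \<in> carrier_vec m" using orthonormal_basis_mat_subset[OF B] w by blast
    have "(B *\<^sub>v (mat_adjoint B *\<^sub>v x)) \<bullet>c w = (mat_adjoint B *\<^sub>v x) \<bullet>c (mat_adjoint B *\<^sub>v w)"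
      using cscalar_prod_mat_adjoint[OF Bc _ wc] Ac x by simp
    also have "\<dots> = x \<bullet>c (B *\<^sub>v (mat_adjoint B *\<^sub>v w))"
      using cscalar_prod_mat_adjoint[OF Ac x, of "mat_adjoint B *\<^sub>v w"] Ac wc by simp
    also have "\<dots> = x \<bullet>c w" using orthonormal_basis_mat_proj[OF B w] by simp
    finally show ?thesis
      using minus_scalar_prod_distrib[OF x Px, of "conjugate w"] wc by simp
  qed
  then show ?thesis using x Px unfolding orth_compl_def by simp
qed

section \<open>Irreducible constituents of unitary representations\<close>

definition unitary_rep :: "('a, 'b) monoid_scheme \<Rightarrow> nat \<Rightarrow> ('a \<Rightarrow> complex mat) \<Rightarrow> bool" where
  "unitary_rep G m \<sigma> \<longleftrightarrow> is_rep G m \<sigma> \<and> (\<forall>g \<in> carrier G. mat_adjoint (\<sigma> g) = \<sigma> (inv\<^bsub>G\<^esub> g))"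

lemma invariant_orthonormal_basis_mat_mult:
  assumes B: "orthonormal_basis_mat m W B" and M: "M \<in> carrier_mat m m"
    and inv: "\<And>w. w \<in> W \<Longrightarrow> M *\<^sub>v w \<in> W"
  shows "M * B = B * (mat_adjoint B * M * B)"
proof -
  define d where "d = dim_col B"
  have Bc: "B \<in> carrier_mat m d" using orthonormal_basis_mat_carrier[OF B] unfolding d_def .
  have Ac: "mat_adjoint B \<in> carrier_mat d m" using Bc by simp
  have AM: "mat_adjoint B * M \<in> carrier_mat d m" using Ac M by simp
  have "(M * B) *\<^sub>v y = (B * (mat_adjoint B * M * B)) *\<^sub>v y" if y: "y \<in> carrier_vec d" for y
  proof -
    have By: "B *\<^sub>v y \<in> W" using orthonormal_basis_mat_mem[OF B] y unfolding d_def .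
    have "(B * (mat_adjoint B * M * B)) *\<^sub>v y = B *\<^sub>v ((mat_adjoint B * M * B) *\<^sub>v y)"
      using Bc AM y by (intro assoc_mult_mat_vec) auto
    also have "(mat_adjoint B * M * B) *\<^sub>v y = (mat_adjoint B * M) *\<^sub>v (B *\<^sub>v y)"
      using AM Bc y by (rule assoc_mult_mat_vec)
    also have "\<dots> = mat_adjoint B *\<^sub>v (M *\<^sub>v (B *\<^sub>v y))"
      using Ac M Bc y by (intro assoc_mult_mat_vec) auto
    also have "B *\<^sub>v \<dots> = M *\<^sub>v (B *\<^sub>v y)" using orthonormal_basis_mat_proj[OF B inv[OF By]] .
    also have "\<dots> = (M * B) *\<^sub>v y" using M Bc y by (rule assoc_mult_mat_vec[symmetric])
    finally show ?thesis by simp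
  qed
  moreover have "B * (mat_adjoint B * M * B) \<in> carrier_mat m d" using Bc AM by simp
  ultimately show ?thesis using Bc M by (intro eq_mat_on_vecI) auto
qed

lemma (in group) unitary_rep_compress:
  assumes U: "unitary_rep G m \<sigma>" and B: "orthonormal_basis_mat m W B"
    and inv: "\<And>g w. g \<in> carrier G \<Longrightarrow> w \<in> W \<Longrightarrow> \<sigma> g *\<^sub>v w \<in> W"
  shows "unitary_rep G (dim_col B) (\<lambda>g. mat_adjoint B * \<sigma> g * B)"
proof -
  define d where "d = dim_col B"
  define \<tau> where "\<tau> g = mat_adjoint B * \<sigma> g * B" for g
  have Bc: "B \<in> carrier_mat m d" using orthonormal_basis_mat_carrier[OF B] unfolding d_def .
  have Ac: "mat_adjoint B \<in> carrier_mat d m" using Bc by simp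
  have iso: "mat_adjoint B * B = 1\<^sub>m d" using orthonormal_basis_mat_isometry[OF B] unfolding d_def .
  have \<sigma>c: "\<sigma> g \<in> carrier_mat m m" if "g \<in> carrier G" for g
    using U that unfolding unitary_rep_def is_rep_def by blast
  have A\<sigma>: "mat_adjoint B * \<sigma> g \<in> carrier_mat d m" if "g \<in> carrier G" for g
    using Ac \<sigma>c[OF that] by simp
  have \<tau>c: "\<tau> g \<in> carrier_mat d d" if "g \<in> carrier G" for g
    unfolding \<tau>_def using A\<sigma>[OF that] Bc by simp
  have intertw: "\<sigma> g * B = B * \<tau> g" if "g \<in> carrier G" for g
    unfolding \<tau>_def using invariant_orthonormal_basis_mat_mult[OF B \<sigma>c[OF that] inv[OF that]] .
  have "\<tau> \<one> = 1\<^sub>m d"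
    using U Ac iso right_mult_one_mat[OF Ac] unfolding \<tau>_def unitary_rep_def is_rep_def by simp
  moreover have "\<tau> (g \<otimes> h) = \<tau> g * \<tau> h" if g: "g \<in> carrier G" and h: "h \<in> carrier G" for g h
  proof -
    have "\<tau> (g \<otimes> h) = mat_adjoint B * (\<sigma> g * \<sigma> h) * B"
      using U g h unfolding \<tau>_def unitary_rep_def is_rep_def by simp
    also have "\<dots> = (mat_adjoint B * \<sigma> g) * (\<sigma> h * B)"
      using assoc_mult_mat[OF Ac \<sigma>c[OF g] \<sigma>c[OF h]] assoc_mult_mat[OF A\<sigma>[OF g] \<sigma>c[OF h] Bc] by simp
    also have "\<dots> = \<tau> g * \<tau> h"
      unfolding intertw[OF h] \<tau>_def using assoc_mult_mat[OF A\<sigma>[OF g] Bc \<tau>c[OF h]] by (simp add: \<tau>_def)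
    finally show ?thesis .
  qed
  moreover have "mat_adjoint (\<tau> g) = \<tau> (inv g)" if g: "g \<in> carrier G" for g
  proof -
    have "mat_adjoint (\<tau> g) = mat_adjoint B * mat_adjoint (mat_adjoint B * \<sigma> g)"
      unfolding \<tau>_def by (rule mat_adjoint_mult[OF A\<sigma>[OF g] Bc])
    also have "mat_adjoint (mat_adjoint B * \<sigma> g) = \<sigma> (inv g) * B"
      using mat_adjoint_mult[OF Ac \<sigma>c[OF g]] U g unfolding unitary_rep_def by simp
    also have "mat_adjoint B * (\<sigma> (inv g) * B) = \<tau> (inv g)"
      unfolding \<tau>_def using assoc_mult_mat[OF Ac \<sigma>c[OF inv_closed[OF g]] Bc] by simp
    finally show ?thesis .
  qed
  ultimately show ?thesis
    using \<tau>c unfolding unitary_rep_def is_rep_def \<tau>_def d_def by blast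
qed

lemma (in group) unitary_rep_orth_compl_invariant:
  assumes U: "unitary_rep G m \<sigma>" and W: "W \<subseteq> carrier_vec m"
    and inv: "\<And>g w. g \<in> carrier G \<Longrightarrow> w \<in> W \<Longrightarrow> \<sigma> g *\<^sub>v w \<in> W"
    and g: "g \<in> carrier G" and x: "x \<in> orth_compl m W"
  shows "\<sigma> g *\<^sub>v x \<in> orth_compl m W"
proof -
  have \<sigma>c: "\<sigma> g \<in> carrier_mat m m" using U g unfolding unitary_rep_def is_rep_def by blast
  have xc: "x \<in> carrier_vec m" using x unfolding orth_compl_def by simp
  have "(\<sigma> g *\<^sub>v x) \<bullet>c w = 0" if w: "w \<in> W" for w
  proof -
    have "(\<sigma> g *\<^sub>v x) \<bullet>c w = x \<bullet>c (\<sigma> (inv g) *\<^sub>v w)"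
      using cscalar_prod_mat_adjoint[OF \<sigma>c xc] W w U g unfolding unitary_rep_def by auto
    then show ?thesis using x inv[OF inv_closed[OF g] w] unfolding orth_compl_def by simp
  qed
  then show ?thesis using \<sigma>c xc unfolding orth_compl_def by simp
qed

definition intertwines :: "'a set \<Rightarrow> ('a \<Rightarrow> complex mat) \<Rightarrow> ('a \<Rightarrow> complex mat) \<Rightarrow> complex mat \<Rightarrow> bool" where
  "intertwines K \<sigma> \<rho> A \<longleftrightarrow> (\<forall>k \<in> K. A * \<sigma> k = \<rho> k * A)"

lemma (in group) intertwines_compress:
  assumes U: "unitary_rep G m \<sigma>" and B: "orthonormal_basis_mat m W B"
    and inv: "\<And>g w. g \<in> carrier G \<Longrightarrow> w \<in> W \<Longrightarrow> \<sigma> g *\<^sub>v w \<in> W"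
    and K: "K \<subseteq> carrier G" and \<rho>c: "\<And>k. k \<in> K \<Longrightarrow> \<rho> k \<in> carrier_mat n n"
    and A: "A \<in> carrier_mat n m" and AK: "intertwines K \<sigma> \<rho> A"
  shows "intertwines K (\<lambda>g. mat_adjoint B * \<sigma> g * B) \<rho> (A * B)"
  unfolding intertwines_def
proof
  fix k assume k: "k \<in> K"
  define d where "d = dim_col B"
  have Bc: "B \<in> carrier_mat m d" using orthonormal_basis_mat_carrier[OF B] unfolding d_def .
  have \<sigma>c: "\<sigma> k \<in> carrier_mat m m" using U k K unfolding unitary_rep_def is_rep_def by blast
  have kG: "k \<in> carrier G" using k K by blast
  have "A * B * (mat_adjoint B * \<sigma> k * B) = A * (B * (mat_adjoint B * \<sigma> k * B))"
    using A Bc \<sigma>c by (intro assoc_mult_mat) auto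
  also have "\<dots> = A * (\<sigma> k * B)"
    using invariant_orthonormal_basis_mat_mult[OF B \<sigma>c inv[OF kG]] by simp
  also have "\<dots> = \<rho> k * A * B"
    using assoc_mult_mat[OF A \<sigma>c Bc] AK k unfolding intertwines_def by simp
  also have "\<dots> = \<rho> k * (A * B)" using \<rho>c[OF k] A Bc by simp
  finally show "A * B * (mat_adjoint B * \<sigma> k * B) = \<rho> k * (A * B)" .
qed

text \<open>If \<open>A\<close> vanishes on a proper invariant subspace, then it does not vanish on its
  orthogonal complement, which is invariant as well because the representation is unitary.\<close>

lemma (in group) reducible_unitary_rep_nonzero_on_invariant:
  assumes U: "unitary_rep G m \<sigma>" and red: "\<not> is_irred_rep G m \<sigma>"
    and A: "A \<in> carrier_mat n m" and x: "x \<in> carrier_vec m" and Ax: "A *\<^sub>v x \<noteq> 0\<^sub>v n"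
  obtains V v where "is_subspace m V" "V \<noteq> carrier_vec m"
    and "\<And>g w. g \<in> carrier G \<Longrightarrow> w \<in> V \<Longrightarrow> \<sigma> g *\<^sub>v w \<in> V"
    and "v \<in> V" "A *\<^sub>v v \<noteq> 0\<^sub>v n"
proof -
  have "m \<noteq> 0"
  proof
    assume "m = 0"
    then have "A *\<^sub>v x = 0\<^sub>v n" using A x by (intro eq_vecI) (auto simp: scalar_prod_def)
    then show False using Ax by simp
  qed
  then obtain W where W: "is_subspace m W" and W0: "W \<noteq> {0\<^sub>v m}" and W1: "W \<noteq> carrier_vec m"
    and inv: "\<And>g w. g \<in> carrier G \<Longrightarrow> w \<in> W \<Longrightarrow> \<sigma> g *\<^sub>v w \<in> W"
    using red U unfolding is_irred_rep_def unitary_rep_def by blast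
  have Wc: "W \<subseteq> carrier_vec m" using W unfolding is_subspace_def by simp
  show thesis
  proof (cases "\<exists>w \<in> W. A *\<^sub>v w \<noteq> 0\<^sub>v n")
    case True
    then show thesis using that W W1 inv by blast
  next
    case False
    obtain B where B: "orthonormal_basis_mat m W B"
      using subspace_has_orthonormal_basis_mat[OF W] .
    define p where "p = B *\<^sub>v (mat_adjoint B *\<^sub>v x)"
    have p: "p \<in> W"
      unfolding p_def by (rule orthonormal_basis_mat_mem[OF B], rule carrier_vecI) simp
    have "A *\<^sub>v (x - p) = A *\<^sub>v x - A *\<^sub>v p"
      using mult_minus_distrib_mat_vec[OF A x] p Wc by blast
    also have "\<dots> = A *\<^sub>v x" using False p A x by simp
    finally have "A *\<^sub>v (x - p) = A *\<^sub>v x" .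
    moreover have "x - p \<in> orth_compl m W"
      unfolding p_def by (rule orthonormal_basis_mat_residual[OF B x])
    moreover obtain w where "w \<in> W" "w \<noteq> 0\<^sub>v m" using W0 W unfolding is_subspace_def by blast
    ultimately show thesis
      using that[of "orth_compl m W" "x - p"] Ax subspace_orth_compl[OF Wc]
        orth_compl_neq_carrier[OF Wc] unitary_rep_orth_compl_invariant[OF U Wc inv]
      by metis
  qed
qed

lemma (in group) unitary_rep_irreducible_constituent:
  assumes K: "K \<subseteq> carrier G" and \<rho>c: "\<And>k. k \<in> K \<Longrightarrow> \<rho> k \<in> carrier_mat n n"
  shows "unitary_rep G m \<sigma> \<Longrightarrow> A \<in> carrier_mat n m \<Longrightarrow> intertwines K \<sigma> \<rho> A \<Longrightarrow>
    x \<in> carrier_vec m \<Longrightarrow> A *\<^sub>v x \<noteq> 0\<^sub>v n \<Longrightarrow>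
    \<exists>d \<tau> C y. is_irred_rep G d \<tau> \<and> C \<in> carrier_mat n d \<and> intertwines K \<tau> \<rho> C \<and>
      y \<in> carrier_vec d \<and> C *\<^sub>v y \<noteq> 0\<^sub>v n"
proof (induction m arbitrary: \<sigma> A x rule: less_induct)
  case (less m)
  note U = less.prems(1) and A = less.prems(2) and AK = less.prems(3)
  show ?case
  proof (cases "is_irred_rep G m \<sigma>")
    case True
    then show ?thesis using less.prems by blast
  next
    case False
    obtain V v where V: "is_subspace m V" "V \<noteq> carrier_vec m"
      and inv: "\<And>g w. g \<in> carrier G \<Longrightarrow> w \<in> V \<Longrightarrow> \<sigma> g *\<^sub>v w \<in> V"
      and v: "v \<in> V" "A *\<^sub>v v \<noteq> 0\<^sub>v n"
      using reducible_unitary_rep_nonzero_on_invariant[OF U False A less.prems(4,5)] by blast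
    obtain B where B: "orthonormal_basis_mat m V B"
      using subspace_has_orthonormal_basis_mat[OF V(1)] .
    define d where "d = dim_col B"
    have Bc: "B \<in> carrier_mat m d" using orthonormal_basis_mat_carrier[OF B] unfolding d_def .
    have y: "mat_adjoint B *\<^sub>v v \<in> carrier_vec d" unfolding d_def by (rule carrier_vecI) simp
    have "(A * B) *\<^sub>v (mat_adjoint B *\<^sub>v v) = A *\<^sub>v v"
      using orthonormal_basis_mat_proj[OF B v(1)] assoc_mult_mat_vec[OF A Bc y] by simp
    moreover have "A * B \<in> carrier_mat n d" using A Bc by simp
    ultimately show ?thesis
      using less.IH[OF orthonormal_basis_mat_dim_less[OF B V(2)] unitary_rep_compress[OF U B inv] _
          intertwines_compress[OF U B inv K \<rho>c A AK] y[unfolded d_def]] v(2)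
      unfolding d_def by auto
  qed
qed

section \<open>The regular representation\<close>

text \<open>The left regular representation, with the elements of \<open>G\<close> enumerated by \<open>e\<close>.\<close>

definition regular_rep :: "('a, 'b) monoid_scheme \<Rightarrow> nat \<Rightarrow> (nat \<Rightarrow> 'a) \<Rightarrow> 'a \<Rightarrow> complex mat" where
  "regular_rep G N e g = mat N N (\<lambda>(i, j). if e i = g \<otimes>\<^bsub>G\<^esub> e j then 1 else 0)"

lemma regular_rep_dim [simp]:
  "dim_row (regular_rep G N e g) = N" "dim_col (regular_rep G N e g) = N"
  unfolding regular_rep_def by simp_all

lemma regular_rep_carrier: "regular_rep G N e g \<in> carrier_mat N N"
  unfolding regular_rep_def by simp

lemma regular_rep_index [simp]:
  "i < N \<Longrightarrow> j < N \<Longrightarrow> regular_rep G N e g $$ (i, j) = (if e i = g \<otimes>\<^bsub>G\<^esub> e j then 1 else 0)"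
  unfolding regular_rep_def by simp

lemma sum_if_eq_inj_on:
  fixes N :: nat and f :: "nat \<Rightarrow> 'b :: comm_monoid_add"
  assumes "inj_on e {..<N}" and "k < N"
  shows "(\<Sum>l<N. if e l = e k then f l else 0) = f k"
proof -
  have "(\<Sum>l<N. if e l = e k then f l else 0) = (\<Sum>l<N. if l = k then f l else 0)"
    using assms by (intro sum.cong) (auto dest: inj_onD)
  also have "\<dots> = f k" using assms(2) by simp
  finally show ?thesis .
qed

lemma (in group) unitary_rep_regular_rep:
  assumes e: "bij_betw e {..<N} (carrier G)"
  shows "unitary_rep G N (regular_rep G N e)"
proof -
  let ?P = "regular_rep G N e"
  have inj: "inj_on e {..<N}" and ec: "\<And>i. i < N \<Longrightarrow> e i \<in> carrier G"
    using e unfolding bij_betw_def by auto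
  have onto: "\<exists>i<N. e i = x" if "x \<in> carrier G" for x
    using e that unfolding bij_betw_def by (metis imageE lessThan_iff)
  have "?P \<one> = 1\<^sub>m N"
  proof (rule eq_matI)
    fix i j assume "i < dim_row (1\<^sub>m N)" "j < dim_col (1\<^sub>m N)"
    then have i: "i < N" and j: "j < N" by auto
    have "e i = \<one> \<otimes> e j \<longleftrightarrow> i = j" using inj ec[OF j] i j by (auto dest: inj_onD)
    then show "?P \<one> $$ (i, j) = 1\<^sub>m N $$ (i, j)" using i j by simp
  qed auto
  moreover have "?P (g \<otimes> h) = ?P g * ?P h" if g: "g \<in> carrier G" and h: "h \<in> carrier G" for g h
  proof (rule eq_matI)
    fix i j assume "i < dim_row (?P g * ?P h)" "j < dim_col (?P g * ?P h)"
    then have i: "i < N" and j: "j < N" by auto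
    obtain k where k: "k < N" "e k = h \<otimes> e j" using onto h ec[OF j] by blast
    have "(?P g * ?P h) $$ (i, j) = (\<Sum>l<N. ?P g $$ (i, l) * ?P h $$ (l, j))"
      using i j by (simp add: scalar_prod_def atLeast0LessThan)
    also have "\<dots> = (\<Sum>l<N. if e l = e k then (if e i = g \<otimes> e l then 1 else 0) else 0)"
      using i j k by (intro sum.cong) auto
    also have "\<dots> = ?P (g \<otimes> h) $$ (i, j)"
      unfolding sum_if_eq_inj_on[OF inj k(1)] using i j k g h ec[OF j] by (simp add: m_assoc)
    finally show "?P (g \<otimes> h) $$ (i, j) = (?P g * ?P h) $$ (i, j)" by simp
  qed auto
  moreover have "mat_adjoint (?P g) = ?P (inv g)" if g: "g \<in> carrier G" for g
  proof (rule eq_matI)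
    fix i j assume "i < dim_row (?P (inv g))" "j < dim_col (?P (inv g))"
    then have i: "i < N" and j: "j < N" by auto
    have "e j = g \<otimes> e i \<longleftrightarrow> e i = inv g \<otimes> e j"
      using inv_solve_left[OF ec[OF i] g ec[OF j]] by auto
    then show "mat_adjoint (?P g) $$ (i, j) = ?P (inv g) $$ (i, j)" using i j by simp
  qed auto
  ultimately show ?thesis unfolding unitary_rep_def is_rep_def by (simp add: regular_rep_carrier)
qed

lemma (in group) rep_extend_by_zero_equivariant:
  assumes K: "subgroup K G" and \<rho>: "is_rep (G\<lparr>carrier := K\<rparr>) n \<rho>" and u: "u \<in> carrier_vec n"
    and k: "k \<in> K" and g: "g \<in> carrier G"
  shows "(if k \<otimes> g \<in> K then \<rho> (k \<otimes> g) *\<^sub>v u else 0\<^sub>v n)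
    = \<rho> k *\<^sub>v (if g \<in> K then \<rho> g *\<^sub>v u else 0\<^sub>v n)"
proof (cases "g \<in> K")
  case True
  have "\<rho> k \<in> carrier_mat n n" "\<rho> g \<in> carrier_mat n n" "\<rho> (k \<otimes> g) = \<rho> k * \<rho> g"
    using \<rho> k True unfolding is_rep_def by auto
  then show ?thesis using True K k u by (simp add: subgroup.m_closed)
next
  case False
  have "k \<otimes> g \<notin> K"
  proof
    assume "k \<otimes> g \<in> K"
    then have "inv k \<otimes> (k \<otimes> g) \<in> K" using K k by (simp add: subgroup.m_closed subgroup.m_inv_closed)
    then show False using False K k g by (simp add: m_assoc[symmetric] subgroup.mem_carrier)
  qed
  moreover have "\<rho> k \<in> carrier_mat n n" using \<rho> k unfolding is_rep_def by simp
  ultimately show ?thesis using False by simp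
qed

lemma (in group) regular_rep_intertwiner:
  assumes K: "subgroup K G" and \<rho>: "is_rep (G\<lparr>carrier := K\<rparr>) n \<rho>"
    and e: "bij_betw e {..<N} (carrier G)" and u: "u \<in> carrier_vec n"
  obtains A x where "A \<in> carrier_mat n N" "intertwines K (regular_rep G N e) \<rho> A"
    and "x \<in> carrier_vec N" "A *\<^sub>v x = u"
proof -
  have inj: "inj_on e {..<N}" and ec: "\<And>i. i < N \<Longrightarrow> e i \<in> carrier G"
    using e unfolding bij_betw_def by auto
  have onto: "\<exists>i<N. e i = x" if "x \<in> carrier G" for x
    using e that unfolding bij_betw_def by (metis imageE lessThan_iff)
  have \<rho>c: "\<rho> k \<in> carrier_mat n n" if "k \<in> K" for k using \<rho> that unfolding is_rep_def by simp
  define a where "a j = (if e j \<in> K then \<rho> (e j) *\<^sub>v u else 0\<^sub>v n)" for j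
  define A where "A = mat n N (\<lambda>(r, j). a j $ r)"
  have ac: "a j \<in> carrier_vec n" for j
    using mult_mat_vec_carrier[OF \<rho>c u] unfolding a_def by simp
  have A: "A \<in> carrier_mat n N" unfolding A_def by simp
  have colA: "col A j = a j" if "j < N" for j
    using that carrier_vecD[OF ac[of j]] unfolding A_def by (intro eq_vecI) auto
  have "A * regular_rep G N e k = \<rho> k * A" if k: "k \<in> K" for k
  proof (rule eq_matI)
    fix r j assume "r < dim_row (\<rho> k * A)" "j < dim_col (\<rho> k * A)"
    then have r: "r < n" and j: "j < N" using \<rho>c[OF k] A by auto
    have kG: "k \<in> carrier G" using K k subgroup.subset by blast
    obtain l where l: "l < N" "e l = k \<otimes> e j" using onto ec[OF j] kG by blast
    have "(A * regular_rep G N e k) $$ (r, j) = (\<Sum>i<N. A $$ (r, i) * regular_rep G N e k $$ (i, j))"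
      using r j A by (simp add: scalar_prod_def atLeast0LessThan)
    also have "\<dots> = (\<Sum>i<N. if e i = e l then A $$ (r, i) else 0)"
      using j l by (intro sum.cong) auto
    also have "\<dots> = A $$ (r, l)" by (rule sum_if_eq_inj_on[OF inj l(1)])
    also have "\<dots> = a l $ r" using r l unfolding A_def by simp
    also have "a l = \<rho> k *\<^sub>v a j"
      unfolding a_def l(2) by (rule rep_extend_by_zero_equivariant[OF K \<rho> u k ec[OF j]])
    also have "(\<rho> k *\<^sub>v a j) $ r = (\<rho> k * A) $$ (r, j)" using colA[OF j] \<rho>c[OF k] A r j by simp
    finally show "(A * regular_rep G N e k) $$ (r, j) = (\<rho> k * A) $$ (r, j)" .
  qed (use A \<rho>c[OF k] in auto)
  moreover obtain j where j: "j < N" "e j = \<one>" using onto by blast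
  moreover have "A *\<^sub>v unit_vec N j = u"
    using j colA[OF j(1)] A \<rho> K u unfolding a_def is_rep_def
    by (intro eq_vecI) (auto simp: subgroup.one_closed)
  ultimately show thesis using A by (intro that) (auto simp: intertwines_def)
qed

lemma (in group) irreducible_rep_with_intertwiner:
  assumes fin: "finite (carrier G)" and K: "subgroup K G" and \<rho>: "is_irred_rep (G\<lparr>carrier := K\<rparr>) n \<rho>"
  obtains d \<sigma> C y where "is_irred_rep G d \<sigma>" "C \<in> carrier_mat n d" "intertwines K \<sigma> \<rho> C"
    and "y \<in> carrier_vec d" "C *\<^sub>v y \<noteq> 0\<^sub>v n"
proof -
  have \<rho>_rep: "is_rep (G\<lparr>carrier := K\<rparr>) n \<rho>" and "n > 0" using \<rho> unfolding is_irred_rep_def by auto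
  have \<rho>c: "\<rho> k \<in> carrier_mat n n" if "k \<in> K" for k using \<rho>_rep that unfolding is_rep_def by simp
  define N where "N = card (carrier G)"
  obtain e where e: "bij_betw e {..<N} (carrier G)"
    using ex_bij_betw_nat_finite[OF fin] unfolding N_def by (auto simp: atLeast0LessThan)
  obtain A x where A: "A \<in> carrier_mat n N" "intertwines K (regular_rep G N e) \<rho> A"
    and x: "x \<in> carrier_vec N" "A *\<^sub>v x = unit_vec n 0"
    using regular_rep_intertwiner[OF K \<rho>_rep e, of "unit_vec n 0"] by auto
  have "(A *\<^sub>v x) $ 0 = 1" using x(2) \<open>n > 0\<close> by simp
  then have "A *\<^sub>v x \<noteq> 0\<^sub>v n" using \<open>n > 0\<close> by auto
  then show thesis
    using unitary_rep_irreducible_constituent[OF subgroup.subset[OF K] \<rho>c unitary_rep_regular_rep[OF e] A x(1)]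
      that by blast
qed

section \<open>Lifting fixed vectors\<close>

definition vec_average :: "'x set \<Rightarrow> ('x \<Rightarrow> complex vec) \<Rightarrow> nat \<Rightarrow> complex vec" where
  "vec_average S f n = vec n (\<lambda>i. (\<Sum>s \<in> S. f s $ i) / of_nat (card S))"

lemma vec_average_cong:
  "(\<And>s. s \<in> S \<Longrightarrow> f s = g s) \<Longrightarrow> vec_average S f n = vec_average S g n"
  unfolding vec_average_def by simp

lemma vec_average_reindex:
  assumes "bij_betw h S S"
  shows "vec_average S (\<lambda>s. f (h s)) n = vec_average S f n"
proof -
  have "(\<Sum>s \<in> S. f (h s) $ i) = (\<Sum>s \<in> S. f s $ i)" for i
    using sum.reindex_bij_betw[OF assms, of "\<lambda>s. f s $ i"] .
  then show ?thesis unfolding vec_average_def by simp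
qed

lemma vec_average_const:
  assumes "finite S" and "S \<noteq> {}" and "u \<in> carrier_vec n"
  shows "vec_average S (\<lambda>_. u) n = u"
  using assms by (intro eq_vecI) (auto simp: vec_average_def)

lemma mult_mat_vec_average:
  assumes M: "M \<in> carrier_mat p n" and f: "\<And>s. s \<in> S \<Longrightarrow> f s \<in> carrier_vec n"
  shows "M *\<^sub>v vec_average S f n = vec_average S (\<lambda>s. M *\<^sub>v f s) p"
proof (rule eq_vecI)
  fix i assume "i < dim_vec (vec_average S (\<lambda>s. M *\<^sub>v f s) p)"
  then have i: "i < p" by (simp add: vec_average_def)
  have "(M *\<^sub>v vec_average S f n) $ i = (\<Sum>k<n. M $$ (i, k) * ((\<Sum>s \<in> S. f s $ k) / of_nat (card S)))"
    using M i by (simp add: vec_average_def scalar_prod_def atLeast0LessThan)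
  also have "\<dots> = (\<Sum>k<n. \<Sum>s \<in> S. M $$ (i, k) * f s $ k) / of_nat (card S)"
    by (simp add: sum_divide_distrib sum_distrib_left)
  also have "\<dots> = (\<Sum>s \<in> S. \<Sum>k<n. M $$ (i, k) * f s $ k) / of_nat (card S)"
    by (subst sum.swap) (rule refl)
  also have "\<dots> = vec_average S (\<lambda>s. M *\<^sub>v f s) p $ i"
  proof -
    have "(M *\<^sub>v f s) $ i = (\<Sum>k<n. M $$ (i, k) * f s $ k)" if "s \<in> S" for s
      using M i f[OF that] by (simp add: scalar_prod_def atLeast0LessThan)
    then show ?thesis using i by (simp add: vec_average_def)
  qed
  finally show "(M *\<^sub>v vec_average S f n) $ i = vec_average S (\<lambda>s. M *\<^sub>v f s) p $ i" .
qed (use M in \<open>simp add: vec_average_def\<close>)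

lemma (in group) vec_average_fixed_space:
  assumes \<sigma>: "is_rep G d \<sigma>" and H: "subgroup H G" and fin: "finite H" and y: "y \<in> carrier_vec d"
  shows "vec_average H (\<lambda>h. \<sigma> h *\<^sub>v y) d \<in> fixed_space d \<sigma> H"
proof -
  have HG: "H \<subseteq> carrier G" using H subgroup.subset by blast
  have \<sigma>c: "\<sigma> g \<in> carrier_mat d d" if "g \<in> carrier G" for g using \<sigma> that unfolding is_rep_def by simp
  have "\<sigma> h' *\<^sub>v vec_average H (\<lambda>h. \<sigma> h *\<^sub>v y) d = vec_average H (\<lambda>h. \<sigma> h *\<^sub>v y) d"
    if h': "h' \<in> H" for h'
  proof -
    have bij: "bij_betw (\<lambda>h. h' \<otimes> h) H H"
    proof (rule bij_betw_byWitness[where f' = "\<lambda>h. inv h' \<otimes> h"])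
      have h'G: "h' \<in> carrier G" using h' HG by blast
      show "\<forall>h \<in> H. inv h' \<otimes> (h' \<otimes> h) = h" "\<forall>h \<in> H. h' \<otimes> (inv h' \<otimes> h) = h"
        using h'G HG by (auto simp: m_assoc[symmetric])
      show "(\<otimes>) h' ` H \<subseteq> H" "(\<lambda>h. inv h' \<otimes> h) ` H \<subseteq> H"
        using h' H by (auto intro: subgroup.m_closed subgroup.m_inv_closed)
    qed
    have "\<sigma> h' *\<^sub>v vec_average H (\<lambda>h. \<sigma> h *\<^sub>v y) d = vec_average H (\<lambda>h. \<sigma> h' *\<^sub>v (\<sigma> h *\<^sub>v y)) d"
      using h' HG \<sigma>c mult_mat_vec_carrier[OF \<sigma>c y] by (intro mult_mat_vec_average) auto
    also have "\<dots> = vec_average H (\<lambda>h. \<sigma> (h' \<otimes> h) *\<^sub>v y) d"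
    proof (rule vec_average_cong)
      fix h assume "h \<in> H"
      then have hG: "h \<in> carrier G" and h'G: "h' \<in> carrier G" using h' HG by auto
      show "\<sigma> h' *\<^sub>v (\<sigma> h *\<^sub>v y) = \<sigma> (h' \<otimes> h) *\<^sub>v y"
        using \<sigma> hG h'G assoc_mult_mat_vec[OF \<sigma>c[OF h'G] \<sigma>c[OF hG] y] unfolding is_rep_def by simp
    qed
    also have "\<dots> = vec_average H (\<lambda>h. \<sigma> h *\<^sub>v y) d"
      by (rule vec_average_reindex[OF bij])
    finally show ?thesis .
  qed
  moreover have "vec_average H (\<lambda>h. \<sigma> h *\<^sub>v y) d \<in> carrier_vec d"
    unfolding vec_average_def by simp
  ultimately show ?thesis unfolding fixed_space_def by blast
qed

lemma subspace_mat_range: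
  assumes C: "C \<in> carrier_mat n d"
  shows "is_subspace n ((\<lambda>x. C *\<^sub>v x) ` carrier_vec d)"
  unfolding is_subspace_def
proof (intro conjI ballI allI)
  let ?R = "(\<lambda>x. C *\<^sub>v x) ` carrier_vec d"
  show "?R \<subseteq> carrier_vec n" using C by auto
  show "0\<^sub>v n \<in> ?R" using C by (intro rev_image_eqI[of "0\<^sub>v d"]) auto
  fix v w assume "v \<in> ?R" "w \<in> ?R"
  then obtain a b where "a \<in> carrier_vec d" "b \<in> carrier_vec d" "v = C *\<^sub>v a" "w = C *\<^sub>v b"
    by blast
  then show "v + w \<in> ?R" using C by (intro rev_image_eqI[of "a + b"]) (auto simp: mult_add_distrib_mat_vec)
next
  fix c v assume "v \<in> (\<lambda>x. C *\<^sub>v x) ` carrier_vec d"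
  then obtain a where "a \<in> carrier_vec d" "v = C *\<^sub>v a" by blast
  then show "c \<cdot>\<^sub>v v \<in> (\<lambda>x. C *\<^sub>v x) ` carrier_vec d"
    using C by (intro rev_image_eqI[of "c \<cdot>\<^sub>v a"]) (auto simp: mult_mat_vec)
qed

lemma irreducible_intertwiner_surj:
  assumes \<rho>: "is_irred_rep L n \<rho>" and C: "C \<in> carrier_mat n d"
    and \<tau>: "\<And>k. k \<in> carrier L \<Longrightarrow> \<tau> k \<in> carrier_mat d d" and CL: "intertwines (carrier L) \<tau> \<rho> C"
    and y: "y \<in> carrier_vec d" "C *\<^sub>v y \<noteq> 0\<^sub>v n" and u: "u \<in> carrier_vec n"
  shows "\<exists>x \<in> carrier_vec d. C *\<^sub>v x = u"
proof -
  define R where "R = (\<lambda>x. C *\<^sub>v x) ` carrier_vec d"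
  have "is_subspace n R" unfolding R_def by (rule subspace_mat_range[OF C])
  moreover have "\<rho> k *\<^sub>v w \<in> R" if k: "k \<in> carrier L" and w: "w \<in> R" for k w
  proof -
    obtain a where a: "a \<in> carrier_vec d" "w = C *\<^sub>v a" using w unfolding R_def by blast
    have \<rho>c: "\<rho> k \<in> carrier_mat n n" using \<rho> k unfolding is_irred_rep_def is_rep_def by blast
    have "\<rho> k *\<^sub>v w = (C * \<tau> k) *\<^sub>v a"
      using CL k a \<rho>c C unfolding intertwines_def by (simp add: assoc_mult_mat_vec)
    also have "\<dots> = C *\<^sub>v (\<tau> k *\<^sub>v a)" using C \<tau>[OF k] a by (simp add: assoc_mult_mat_vec)
    finally show ?thesis unfolding R_def using \<tau>[OF k] a by (simp add: mult_mat_vec_carrier)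
  qed
  moreover have "R \<noteq> {0\<^sub>v n}" using y unfolding R_def by blast
  ultimately have "R = carrier_vec n" using \<rho> unfolding is_irred_rep_def by blast
  then have "u \<in> (\<lambda>x. C *\<^sub>v x) ` carrier_vec d" using u unfolding R_def by simp
  then show ?thesis by (auto simp: image_iff)
qed

lemma (in group) subgroup_pointwise_stab:
  assumes \<sigma>: "is_rep G d \<sigma>" and X: "X \<subseteq> carrier_vec d"
  shows "subgroup (pointwise_stab G \<sigma> X) G"
proof -
  have \<sigma>c: "\<sigma> g \<in> carrier_mat d d" if "g \<in> carrier G" for g using \<sigma> that unfolding is_rep_def by simp
  have \<sigma>mult: "\<sigma> (g \<otimes> h) *\<^sub>v x = \<sigma> g *\<^sub>v (\<sigma> h *\<^sub>v x)"
    if "g \<in> carrier G" "h \<in> carrier G" "x \<in> X" for g h x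
    using \<sigma> that X assoc_mult_mat_vec[OF \<sigma>c \<sigma>c] unfolding is_rep_def by auto
  show ?thesis
  proof (rule subgroupI)
    show "pointwise_stab G \<sigma> X \<subseteq> carrier G" unfolding pointwise_stab_def by blast
    show "pointwise_stab G \<sigma> X \<noteq> {}"
      using \<sigma> X unfolding pointwise_stab_def is_rep_def by (auto intro!: exI[of _ \<one>])
  next
    fix g assume g: "g \<in> pointwise_stab G \<sigma> X"
    then have gG: "g \<in> carrier G" unfolding pointwise_stab_def by blast
    have "\<sigma> (inv g) *\<^sub>v x = x" if x: "x \<in> X" for x
    proof -
      have "\<sigma> (inv g) *\<^sub>v x = \<sigma> (inv g \<otimes> g) *\<^sub>v x"
        using \<sigma>mult[OF inv_closed[OF gG] gG x] g x unfolding pointwise_stab_def by simp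
      then show ?thesis using \<sigma> gG x X unfolding is_rep_def by auto
    qed
    then show "inv g \<in> pointwise_stab G \<sigma> X" using gG unfolding pointwise_stab_def by simp
  next
    fix g h assume "g \<in> pointwise_stab G \<sigma> X" "h \<in> pointwise_stab G \<sigma> X"
    then show "g \<otimes> h \<in> pointwise_stab G \<sigma> X" using \<sigma>mult unfolding pointwise_stab_def by simp
  qed
qed

lemma (in group) pointwise_stab_fixed_space_inter:
  assumes H: "subgroup H G" "finite H" and K: "K \<subseteq> carrier G" and HK: "H \<subseteq> K"
    and \<rho>: "is_irred_rep (G\<lparr>carrier := K\<rparr>) n \<rho>" and \<sigma>: "is_rep G d \<sigma>"
    and C: "C \<in> carrier_mat n d" and CK: "intertwines K \<sigma> \<rho> C"
    and y: "y \<in> carrier_vec d" "C *\<^sub>v y \<noteq> 0\<^sub>v n"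
  shows "pointwise_stab G \<sigma> (fixed_space d \<sigma> H) \<inter> K
    \<subseteq> pointwise_stab (G\<lparr>carrier := K\<rparr>) \<rho> (fixed_space n \<rho> H)"
proof
  fix l assume l: "l \<in> pointwise_stab G \<sigma> (fixed_space d \<sigma> H) \<inter> K"
  have \<sigma>c: "\<sigma> g \<in> carrier_mat d d" if "g \<in> carrier G" for g using \<sigma> that unfolding is_rep_def by simp
  have \<rho>c: "\<rho> k \<in> carrier_mat n n" if "k \<in> K" for k
    using \<rho> that unfolding is_irred_rep_def is_rep_def by simp
  have lK: "l \<in> K" and lG: "l \<in> carrier G" using l K by auto
  have "\<rho> l *\<^sub>v u = u" if u: "u \<in> fixed_space n \<rho> H" for u
  proof -
    have uc: "u \<in> carrier_vec n" using u unfolding fixed_space_def by simp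
    obtain z where z: "z \<in> carrier_vec d" "C *\<^sub>v z = u"
      using irreducible_intertwiner_surj[OF \<rho> C _ _ y uc] \<sigma>c K CK by auto
    define x where "x = vec_average H (\<lambda>h. \<sigma> h *\<^sub>v z) d"
    have HG: "H \<subseteq> carrier G" using H(1) subgroup.subset by blast
    have "C *\<^sub>v x = vec_average H (\<lambda>h. C *\<^sub>v (\<sigma> h *\<^sub>v z)) n"
      unfolding x_def using C HG mult_mat_vec_carrier[OF \<sigma>c z(1)] by (intro mult_mat_vec_average) auto
    also have "\<dots> = vec_average H (\<lambda>_. u) n"
    proof (rule vec_average_cong)
      fix h assume h: "h \<in> H"
      then have hG: "h \<in> carrier G" and hK: "h \<in> K" using HG HK by auto
      have "C *\<^sub>v (\<sigma> h *\<^sub>v z) = (\<rho> h * C) *\<^sub>v z"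
        using CK hK assoc_mult_mat_vec[OF C \<sigma>c[OF hG] z(1)] unfolding intertwines_def by simp
      also have "\<dots> = \<rho> h *\<^sub>v u" using assoc_mult_mat_vec[OF \<rho>c[OF hK] C z(1)] z(2) by simp
      also have "\<dots> = u" using u h unfolding fixed_space_def by simp
      finally show "C *\<^sub>v (\<sigma> h *\<^sub>v z) = u" .
    qed
    also have "\<dots> = u" using H uc subgroup.one_closed[OF H(1)] by (intro vec_average_const) auto
    finally have Cx: "C *\<^sub>v x = u" .
    have "x \<in> fixed_space d \<sigma> H" unfolding x_def by (rule vec_average_fixed_space[OF \<sigma> H z(1)])
    then have "\<sigma> l *\<^sub>v x = x" using l unfolding pointwise_stab_def by blast
    moreover have xc: "x \<in> carrier_vec d" unfolding x_def vec_average_def by simp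
    ultimately have "C *\<^sub>v x = (C * \<sigma> l) *\<^sub>v x" using assoc_mult_mat_vec[OF C \<sigma>c[OF lG] xc] by simp
    also have "\<dots> = \<rho> l *\<^sub>v u"
      using CK lK assoc_mult_mat_vec[OF \<rho>c[OF lK] C xc] Cx unfolding intertwines_def by simp
    finally show ?thesis using Cx by simp
  qed
  then show "l \<in> pointwise_stab (G\<lparr>carrier := K\<rparr>) \<rho> (fixed_space n \<rho> H)"
    using lK unfolding pointwise_stab_def by simp
qed

section \<open>Atoms of the interval\<close>

lemma (in group) interval_atom_below:
  assumes fin: "finite (carrier G)"
  shows "subgroup M G \<Longrightarrow> H \<subset> M \<Longrightarrow> \<exists>L \<in> interval_atoms G H. L \<subseteq> M"
proof (induction "card M" arbitrary: M rule: less_induct)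
  case less
  show ?case
  proof (cases "\<exists>M'. subgroup M' G \<and> H \<subset> M' \<and> M' \<subset> M")
    case True
    then obtain M' where M': "subgroup M' G" "H \<subset> M'" "M' \<subset> M" by blast
    have "finite M" using less.prems(1) fin subgroup.subset finite_subset by metis
    then have "card M' < card M" using M'(3) psubset_card_mono by blast
    then obtain L where "L \<in> interval_atoms G H" "L \<subseteq> M'" using less.hyps M'(1,2) by blast
    then show ?thesis using M'(3) by blast
  next
    case False
    then have "M \<in> interval_atoms G H" unfolding interval_atoms_def using less.prems by blast
    then show ?thesis by blast
  qed
qed

lemma (in group) subgroup_bottom_top:
  assumes "subgroup H G"
  shows "subgroup (bottom_top G H) G" and "H \<subseteq> bottom_top G H"
    and "L \<in> interval_atoms G H \<Longrightarrow> L \<subseteq> bottom_top G H"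
proof -
  have "H \<union> \<Union> (interval_atoms G H) \<subseteq> carrier G"
    using assms subgroup.subset unfolding interval_atoms_def by blast
  then show "subgroup (bottom_top G H) G" unfolding bottom_top_def by (rule generate_is_subgroup)
  show "H \<subseteq> bottom_top G H"
    unfolding bottom_top_def using generate.incl[of _ "H \<union> \<Union> (interval_atoms G H)" G] by blast
  show "L \<in> interval_atoms G H \<Longrightarrow> L \<subseteq> bottom_top G H"
    unfolding bottom_top_def using generate.incl[of _ "H \<union> \<Union> (interval_atoms G H)" G] by blast
qed

lemma (in group) eq_bottom_if_inter_bottom_top:
  assumes fin: "finite (carrier G)" and S: "subgroup S G" and H: "subgroup H G"
    and HS: "H \<subseteq> S" and SK: "S \<inter> bottom_top G H \<subseteq> H"
  shows "S = H"
proof (rule ccontr)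
  assume "S \<noteq> H"
  then obtain L where L: "L \<in> interval_atoms G H" "L \<subseteq> S"
    using interval_atom_below[OF fin S] HS by blast
  then have "H \<subset> L" unfolding interval_atoms_def by blast
  moreover have "L \<subseteq> H" using L subgroup_bottom_top(3)[OF H L(1)] SK by blast
  ultimately show False by blast
qed

theorem lemma3p12:
  fixes G :: "('a, 'b) monoid_scheme" and H :: "'a set"
  assumes "group G" and "finite (carrier G)" and "subgroup H G"
    and "lin_primitive (G\<lparr>carrier := bottom_top G H\<rparr>) H"
  shows "lin_primitive G H"
proof -
  interpret group G by (rule assms(1))
  define K where "K = bottom_top G H"
  have K: "subgroup K G" and HK: "H \<subseteq> K" unfolding K_def by (rule subgroup_bottom_top[OF assms(3)])+
  have HG: "H \<subseteq> carrier G" using assms(3) subgroup.subset by blast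
  obtain n \<rho> where \<rho>: "is_irred_rep (G\<lparr>carrier := K\<rparr>) n \<rho>"
    and stab_K: "pointwise_stab (G\<lparr>carrier := K\<rparr>) \<rho> (fixed_space n \<rho> H) = H"
    using assms(4) unfolding lin_primitive_def K_def by blast
  obtain d \<sigma> C y where \<sigma>: "is_irred_rep G d \<sigma>" and C: "C \<in> carrier_mat n d" "intertwines K \<sigma> \<rho> C"
    and y: "y \<in> carrier_vec d" "C *\<^sub>v y \<noteq> 0\<^sub>v n"
    using irreducible_rep_with_intertwiner[OF assms(2) K \<rho>] .
  have \<sigma>_rep: "is_rep G d \<sigma>" using \<sigma> unfolding is_irred_rep_def by simp
  define S where "S = pointwise_stab G \<sigma> (fixed_space d \<sigma> H)"
  have S: "subgroup S G"
    unfolding S_def by (rule subgroup_pointwise_stab[OF \<sigma>_rep]) (unfold fixed_space_def, blast)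
  have HS: "H \<subseteq> S" using HG unfolding S_def pointwise_stab_def fixed_space_def by blast
  have "finite H" using assms(2) HG finite_subset by blast
  then have "S \<inter> K \<subseteq> pointwise_stab (G\<lparr>carrier := K\<rparr>) \<rho> (fixed_space n \<rho> H)"
    unfolding S_def
    by (rule pointwise_stab_fixed_space_inter[OF assms(3) _ subgroup.subset[OF K] HK \<rho> \<sigma>_rep C y])
  then have "S = H"
    using eq_bottom_if_inter_bottom_top[OF assms(2) S assms(3) HS] stab_K unfolding K_def by simp
  then show ?thesis unfolding lin_primitive_def S_def using \<sigma> by (intro exI conjI)
qed

end
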